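(* Let $\alpha\in[0,1)$ and let $s\geq 2$ be an integer with $n=3s-1\geq f(\alpha)$. Then $\rho_{\alpha}\big(K_s\vee(2s-1)K_1\big)<n-3<\eta(n)$.
   Context: For a graph $G$, $A_{\alpha}(G)=\alpha D(G)+(1-\alpha)A(G)$ where $D(G)$ is the diagonal degree matrix and $A(G)$ the adjacency matrix, and $\rho_{\alpha}(G)$ is the largest eigenvalue of $A_{\alpha}(G)$. $\vee$ denotes join, $K_m$ the complete graph on $m$ vertices, $tK_1$ the edgeless graph on $t$ vertices. Define $f(\alpha)=14$ if $\alpha\in[0,\frac12]$, $f(\alpha)=17$ if $\alpha\in(\frac12,\frac23]$, $f(\alpha)=20$ if $\alpha\in(\frac23,\frac34]$, and $f(\alpha)=\frac{5}{1-\alpha}+1$ if $\alpha\in(\frac34,1)$. $\eta(n)$ is the largest root of $x^{3}-((\alpha+1)n+\alpha-4)x^{2}+(\alpha n^{2}+(\alpha^{2}-2\alpha-1)n-2\alpha+1)x-\alpha^{2}n^{2}+(5\alpha^{2}-3\alpha+2)n-10\alpha^{2}+15\alpha-8=0$. *)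

theory Defs
  imports Complex_Main
begin

text \<open>A (simple) graph on the vertex set {0..<n} is given by its number of
vertices n and a symmetric irreflexive adjacency relation adj.
Matrices are functions nat => nat => real indexed by {0..<n}.\<close>

definition degree :: "nat \<Rightarrow> (nat \<Rightarrow> nat \<Rightarrow> bool) \<Rightarrow> nat \<Rightarrow> nat" where
  "degree n adj i = card {j. j < n \<and> adj i j}"

definition A_alpha :: "real \<Rightarrow> nat \<Rightarrow> (nat \<Rightarrow> nat \<Rightarrow> bool) \<Rightarrow> nat \<Rightarrow> nat \<Rightarrow> real" where
  "A_alpha \<alpha> n adj i j =
     \<alpha> * (if i = j then real (degree n adj i) else 0)
     + (1 - \<alpha>) * (if adj i j then 1 else 0)"

definition is_eigenvalue :: "nat \<Rightarrow> (nat \<Rightarrow> nat \<Rightarrow> real) \<Rightarrow> real \<Rightarrow> bool" where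
  "is_eigenvalue n M mu \<longleftrightarrow>
     (\<exists>v :: nat \<Rightarrow> real. (\<exists>i<n. v i \<noteq> 0) \<and>
        (\<forall>i<n. (\<Sum>j<n. M i j * v j) = mu * v i))"

text \<open>Largest eigenvalue of A_alpha(G) (all eigenvalues are real, the matrix being symmetric).\<close>
definition rho_alpha :: "real \<Rightarrow> nat \<Rightarrow> (nat \<Rightarrow> nat \<Rightarrow> bool) \<Rightarrow> real" where
  "rho_alpha \<alpha> n adj = Max {mu. is_eigenvalue n (A_alpha \<alpha> n adj) mu}"

definition complete_graph :: "nat \<Rightarrow> nat \<Rightarrow> bool" where
  "complete_graph i j \<longleftrightarrow> i \<noteq> j"

definition empty_graph :: "nat \<Rightarrow> nat \<Rightarrow> bool" where
  "empty_graph i j \<longleftrightarrow> False"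

text \<open>Join of a graph G on {0..<a} and a graph H on {0..<b}, as a graph on {0..<a+b}:
vertices of H are shifted by a.\<close>
definition graph_join :: "nat \<Rightarrow> (nat \<Rightarrow> nat \<Rightarrow> bool) \<Rightarrow> (nat \<Rightarrow> nat \<Rightarrow> bool) \<Rightarrow> nat \<Rightarrow> nat \<Rightarrow> bool" where
  "graph_join a G H i j \<longleftrightarrow>
     (i < a \<and> j < a \<and> G i j) \<or> (a \<le> i \<and> a \<le> j \<and> H (i - a) (j - a))
     \<or> (i < a \<and> a \<le> j) \<or> (a \<le> i \<and> j < a)"

definition f_bound :: "real \<Rightarrow> real" where
  "f_bound \<alpha> = (if \<alpha> \<le> 1/2 then 14 else if \<alpha> \<le> 2/3 then 17
                 else if \<alpha> \<le> 3/4 then 20 else 5 / (1 - \<alpha>) + 1)"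

definition eta_poly :: "real \<Rightarrow> real \<Rightarrow> real \<Rightarrow> real" where
  "eta_poly \<alpha> n x = x ^ 3 - ((\<alpha> + 1) * n + \<alpha> - 4) * x ^ 2
     + (\<alpha> * n ^ 2 + (\<alpha> ^ 2 - 2 * \<alpha> - 1) * n - 2 * \<alpha> + 1) * x
     - \<alpha> ^ 2 * n ^ 2 + (5 * \<alpha> ^ 2 - 3 * \<alpha> + 2) * n - 10 * \<alpha> ^ 2 + 15 * \<alpha> - 8"

definition eta :: "real \<Rightarrow> real \<Rightarrow> real" where
  "eta \<alpha> n = Max {x. eta_poly \<alpha> n x = 0}"

end

theory Submission
  imports Defs "HOL-Computational_Algebra.Polynomial"
begin

text \<open>The \<open>A\<^sub>\<alpha>\<close>-eigenvalues of \<open>K\<^sub>s \<or> (n - s)K\<^sub>1\<close> are \<open>\<alpha>n - 1\<close>, \<open>\<alpha>s\<close> and the roots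
  of the characteristic quadratic of the \<open>2 \<times> 2\<close> quotient matrix for the partition into clique and
  independent set. For \<open>n = 3s - 1\<close> the condition \<open>n \<ge> f(\<alpha>)\<close> amounts to \<open>(1 - \<alpha>)n \<ge> 5\<close>, which puts
  all of them below \<open>n - 3\<close>. The cubic defining \<open>\<eta>(n)\<close> is negative at \<open>n - 3\<close> and nonnegative at
  \<open>n\<close>, so it has a root above \<open>n - 3\<close>.\<close>

lemma sum_A_alpha_row:
  assumes "i < n"
  shows "(\<Sum>j<n. A_alpha \<alpha> n adj i j * v j)
       = \<alpha> * real (Defs.degree n adj i) * v i + (1 - \<alpha>) * (\<Sum>j | j < n \<and> adj i j. v j)"
proof -
  have "(\<Sum>j<n. A_alpha \<alpha> n adj i j * v j)
      = (\<Sum>j<n. if i = j then \<alpha> * real (Defs.degree n adj i) * v j else 0)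
        + (1 - \<alpha>) * (\<Sum>j<n. if adj i j then v j else 0)"
    unfolding sum_distrib_left sum.distrib[symmetric]
    by (intro sum.cong) (auto simp: A_alpha_def algebra_simps)
  also have "(\<Sum>j | j < n \<and> adj i j. v j) = (\<Sum>j<n. if adj i j then v j else 0)"
    by (simp add: sum.inter_filter[symmetric] conj_commute)
  ultimately show ?thesis
    using assms by simp
qed

abbreviation complete_split_graph :: "nat \<Rightarrow> nat \<Rightarrow> nat \<Rightarrow> bool" where
  "complete_split_graph s \<equiv> graph_join s complete_graph empty_graph"

lemma complete_split_graph_iff:
  "complete_split_graph s i j \<longleftrightarrow> i \<noteq> j \<and> (i < s \<or> j < s)"
  by (auto simp: graph_join_def complete_graph_def empty_graph_def)

lemma sum_A_alpha_row_clique: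
  assumes "i < s" "s \<le> n"
  shows "(\<Sum>j<n. A_alpha \<alpha> n (complete_split_graph s) i j * v j)
       = \<alpha> * (real n - 1) * v i + (1 - \<alpha>) * ((\<Sum>j<n. v j) - v i)"
proof -
  have nbrs: "{j. j < n \<and> complete_split_graph s i j} = {..<n} - {i}"
    using assms by (auto simp: complete_split_graph_iff)
  show ?thesis
    using assms by (simp add: sum_A_alpha_row Defs.degree_def nbrs sum_diff1 of_nat_diff)
qed

lemma sum_A_alpha_row_independent:
  assumes "s \<le> i" "i < n"
  shows "(\<Sum>j<n. A_alpha \<alpha> n (complete_split_graph s) i j * v j)
       = \<alpha> * real s * v i + (1 - \<alpha>) * (\<Sum>j<s. v j)"
proof -
  have nbrs: "{j. j < n \<and> complete_split_graph s i j} = {..<s}"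
    using assms by (auto simp: complete_split_graph_iff)
  show ?thesis
    using assms by (simp add: sum_A_alpha_row Defs.degree_def nbrs)
qed

text \<open>Characteristic polynomial of the quotient matrix
  \<open>[[\<alpha>(n - 1) + (1 - \<alpha>)(s - 1), (1 - \<alpha>)(n - s)], [(1 - \<alpha>)s, \<alpha>s]]\<close>.\<close>

definition split_quadratic :: "real \<Rightarrow> real \<Rightarrow> real \<Rightarrow> real \<Rightarrow> real" where
  "split_quadratic \<alpha> n s \<mu> = (\<mu> - (\<alpha> * n - 1 + s * (1 - \<alpha>))) * (\<mu> - \<alpha> * s) - s * (n - s) * (1 - \<alpha>)\<^sup>2"

lemma complete_split_graph_eigenvalue_cases:
  assumes "s \<le> n" and "is_eigenvalue n (A_alpha \<alpha> n (complete_split_graph s)) \<mu>"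
  shows "\<mu> = \<alpha> * real n - 1 \<or> \<mu> = \<alpha> * real s \<or> split_quadratic \<alpha> (real n) (real s) \<mu> = 0"
proof (rule ccontr)
  assume "\<not> ?thesis"
  then have clique: "\<mu> - (\<alpha> * real n - 1) \<noteq> 0" and indep: "\<mu> - \<alpha> * real s \<noteq> 0"
    and q: "split_quadratic \<alpha> (real n) (real s) \<mu> \<noteq> 0"
    by auto
  obtain v k where k: "k < n" "v k \<noteq> 0"
    and ev: "\<And>i. i < n \<Longrightarrow> (\<Sum>j<n. A_alpha \<alpha> n (complete_split_graph s) i j * v j) = \<mu> * v i"
    using assms(2) unfolding is_eigenvalue_def by blast
  define X where "X = (\<Sum>j<s. v j)"
  define Y where "Y = (\<Sum>j\<in>{s..<n}. v j)"
  have XY: "(\<Sum>j<n. v j) = X + Y"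
    using assms(1) unfolding X_def Y_def lessThan_atLeast0 by (simp add: sum.atLeastLessThan_concat)
  have v_clique: "(\<mu> - (\<alpha> * real n - 1)) * v i = (1 - \<alpha>) * (X + Y)" if "i < s" for i
    using ev[of i] sum_A_alpha_row_clique[OF that assms(1), of \<alpha> v] that assms(1) XY
    by (simp add: algebra_simps)
  have v_indep: "(\<mu> - \<alpha> * real s) * v i = (1 - \<alpha>) * X" if "s \<le> i" "i < n" for i
    using ev[of i] sum_A_alpha_row_independent[OF that, of \<alpha> v] that X_def
    by (simp add: algebra_simps)
  txt \<open>Summing the eigen-equations over each part gives a linear system in the part sums \<open>X\<close>, \<open>Y\<close>
    whose determinant is the split quadratic, so \<open>X = Y = 0\<close> and then \<open>v = 0\<close>.\<close>
  define a where "a = \<alpha> * real n - 1 + real s * (1 - \<alpha>)"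
  define b where "b = \<alpha> * real s"
  define t where "t = 1 - \<alpha>"
  have sum_clique: "(\<mu> - a) * X = real s * t * Y"
  proof -
    have "(\<mu> - (\<alpha> * real n - 1)) * X = (\<Sum>i<s. (\<mu> - (\<alpha> * real n - 1)) * v i)"
      unfolding X_def by (simp add: sum_distrib_left)
    also have "\<dots> = (\<Sum>i<s. (1 - \<alpha>) * (X + Y))"
      using v_clique by simp
    finally show ?thesis unfolding a_def t_def by (simp add: algebra_simps)
  qed
  have sum_indep: "(\<mu> - b) * Y = (real n - real s) * t * X"
  proof -
    have "(\<mu> - \<alpha> * real s) * Y = (\<Sum>i\<in>{s..<n}. (\<mu> - \<alpha> * real s) * v i)"
      unfolding Y_def by (simp add: sum_distrib_left)
    also have "\<dots> = (\<Sum>i\<in>{s..<n}. (1 - \<alpha>) * X)"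
      using v_indep by simp
    finally show ?thesis using assms(1) unfolding b_def t_def by (simp add: of_nat_diff)
  qed
  have quadratic_eq: "split_quadratic \<alpha> (real n) (real s) \<mu> = (\<mu> - a) * (\<mu> - b) - real s * (real n - real s) * t\<^sup>2"
    unfolding split_quadratic_def a_def b_def t_def ..
  have "split_quadratic \<alpha> (real n) (real s) \<mu> * X
      = (\<mu> - b) * ((\<mu> - a) * X) - real s * t * ((real n - real s) * t * X)"
    unfolding quadratic_eq by (simp add: algebra_simps power2_eq_square)
  also have "\<dots> = 0"
    unfolding sum_clique sum_indep[symmetric] by (simp add: algebra_simps)
  finally have "split_quadratic \<alpha> (real n) (real s) \<mu> * X = 0" .
  moreover have "split_quadratic \<alpha> (real n) (real s) \<mu> * Y
      = (\<mu> - a) * ((\<mu> - b) * Y) - (real n - real s) * t * (real s * t * Y)"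
    unfolding quadratic_eq by (simp add: algebra_simps power2_eq_square)
  moreover have "\<dots> = 0"
    unfolding sum_indep sum_clique[symmetric] by (simp add: algebra_simps)
  ultimately have "X = 0" "Y = 0"
    using q by simp_all
  then show False
    using k clique indep v_clique[of k] v_indep[of k] by (cases "k < s") auto
qed

lemma complete_split_graph_eigenvalue_independent:
  assumes "s + 2 \<le> n"
  shows "is_eigenvalue n (A_alpha \<alpha> n (complete_split_graph s)) (\<alpha> * real s)"
proof -
  define v :: "nat \<Rightarrow> real" where "v j = (if j = s then 1 else if j = s + 1 then -1 else 0)" for j
  have sum_all: "(\<Sum>j<n. v j) = 0"
    using assms by (simp add: v_def sum.If_cases)
  have sum_clique: "(\<Sum>j<s. v j) = 0"
    by (simp add: v_def)
  have "(\<Sum>j<n. A_alpha \<alpha> n (complete_split_graph s) i j * v j) = \<alpha> * real s * v i"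
    if "i < n" for i
  proof (cases "i < s")
    case True
    then show ?thesis
      using assms by (simp add: sum_A_alpha_row_clique sum_all) (simp add: v_def)
  next
    case False
    then show ?thesis
      using that by (simp add: sum_A_alpha_row_independent sum_clique)
  qed
  moreover have "v s \<noteq> 0" "s < n"
    using assms by (simp_all add: v_def)
  ultimately show ?thesis
    unfolding is_eigenvalue_def by blast
qed

lemma finite_complete_split_graph_eigenvalues:
  assumes "s \<le> n"
  shows "finite {\<mu>. is_eigenvalue n (A_alpha \<alpha> n (complete_split_graph s)) \<mu>}"
proof -
  define a where "a = \<alpha> * real n - 1 + real s * (1 - \<alpha>)"
  define b where "b = \<alpha> * real s"
  define p where "p = [: a * b - real s * (real n - real s) * (1 - \<alpha>)\<^sup>2, - (a + b), 1 :]"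
  have "poly p \<mu> = split_quadratic \<alpha> (real n) (real s) \<mu>" for \<mu>
    unfolding p_def a_def b_def split_quadratic_def by (simp add: algebra_simps)
  moreover have "finite {\<mu>. poly p \<mu> = 0}"
    by (rule poly_roots_finite) (simp add: p_def)
  ultimately have "finite ({\<alpha> * real n - 1, \<alpha> * real s} \<union> {\<mu>. split_quadratic \<alpha> (real n) (real s) \<mu> = 0})"
    by simp
  then show ?thesis
    by (rule finite_subset[rotated]) (auto dest: complete_split_graph_eigenvalue_cases[OF assms])
qed

lemma rho_alpha_complete_split_graph_less:
  assumes "s + 2 \<le> n"
    and "\<alpha> * real n - 1 < y" and "\<alpha> * real s < y"
    and "\<And>\<mu>. split_quadratic \<alpha> (real n) (real s) \<mu> = 0 \<Longrightarrow> \<mu> < y"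
  shows "rho_alpha \<alpha> n (complete_split_graph s) < y"
proof -
  have "s \<le> n" using assms(1) by simp
  show ?thesis
    unfolding rho_alpha_def
    using finite_complete_split_graph_eigenvalues[OF \<open>s \<le> n\<close>]
      complete_split_graph_eigenvalue_independent[OF assms(1)]
      complete_split_graph_eigenvalue_cases[OF \<open>s \<le> n\<close>] assms(2-4)
    by (subst Max_less_iff) blast+
qed

lemma f_bound_ge_14:
  assumes "0 \<le> \<alpha>" "\<alpha> < 1"
  shows "14 \<le> f_bound \<alpha>"
proof -
  have "\<alpha> > 3/4 \<Longrightarrow> 5 / (1 - \<alpha>) > 20"
    using assms by (simp add: field_simps)
  then show ?thesis
    unfolding f_bound_def by auto
qed

lemma five_le_mult_of_f_bound_le:
  assumes "0 \<le> \<alpha>" "\<alpha> < 1" "f_bound \<alpha> \<le> x"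
  shows "5 \<le> (1 - \<alpha>) * x"
proof (cases "\<alpha> \<le> 3/4")
  case True
  then consider "\<alpha> \<le> 1/2" "14 \<le> x" | "\<alpha> \<le> 2/3" "17 \<le> x" | "20 \<le> x"
    using assms(3) unfolding f_bound_def by (auto split: if_splits)
  then show ?thesis
  proof cases
    case 1
    then have "1/2 * 14 \<le> (1 - \<alpha>) * x" by (intro mult_mono) auto
    then show ?thesis by simp
  next
    case 2
    then have "1/3 * 17 \<le> (1 - \<alpha>) * x" by (intro mult_mono) auto
    then show ?thesis by simp
  next
    case 3
    then have "1/4 * 20 \<le> (1 - \<alpha>) * x" using True by (intro mult_mono) auto
    then show ?thesis by simp
  qed
next
  case False
  then have "5 / (1 - \<alpha>) + 1 \<le> x"
    using assms(3) unfolding f_bound_def by simp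
  then have "(1 - \<alpha>) * (5 / (1 - \<alpha>) + 1) \<le> (1 - \<alpha>) * x"
    using assms(2) by (simp add: mult_left_mono)
  moreover have "(1 - \<alpha>) * (5 / (1 - \<alpha>) + 1) = 6 - \<alpha>"
    using assms(2) by (simp add: field_simps)
  ultimately show ?thesis
    using assms(2) by simp
qed

lemma quadratic_root_less:
  fixes a b c x y :: real
  assumes "(x - a) * (x - b) - c = 0" "0 < (y - a) * (y - b) - c" "a + b \<le> 2 * y"
  shows "x < y"
proof (rule ccontr)
  assume "\<not> x < y"
  then have "0 \<le> (x - y) * (x + y - a - b)"
    using assms(3) by simp
  also have "\<dots> = ((x - a) * (x - b) - c) - ((y - a) * (y - b) - c)"
    by (simp add: algebra_simps)
  finally show False
    using assms(1,2) by simp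
qed

lemma split_quadratic_root_less:
  fixes \<alpha> S \<mu> :: real
  assumes "0 \<le> \<alpha>" "5 \<le> S" "5 \<le> (1 - \<alpha>) * (3 * S - 1)"
    and "split_quadratic \<alpha> (3 * S - 1) S \<mu> = 0"
  shows "\<mu> < 3 * S - 4"
proof -
  have "\<alpha> < 1"
    using assms(2,3) mult_nonpos_nonneg[of "1 - \<alpha>" "3 * S - 1"] by linarith
  have "(S - 2) * (3 * S - 1) < 5 * (S\<^sup>2 - 3 * S + 1)"
  proof -
    have "0 \<le> S * (S - 4)" using assms(2) by simp
    then show ?thesis by (simp add: power2_eq_square algebra_simps)
  qed
  also have "\<dots> \<le> (1 - \<alpha>) * (3 * S - 1) * (S\<^sup>2 - 3 * S + 1)"
  proof (rule mult_right_mono[OF assms(3)])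
    have "0 \<le> S * (S - 3)" using assms(2) by simp
    then show "0 \<le> S\<^sup>2 - 3 * S + 1" by (simp add: power2_eq_square algebra_simps)
  qed
  finally have "S - 2 < (1 - \<alpha>) * (S\<^sup>2 - 3 * S + 1)"
    using assms(2) by (simp add: mult.commute mult.left_commute)
  moreover have "split_quadratic \<alpha> (3 * S - 1) S (3 * S - 4)
      = 4 * ((1 - \<alpha>) * (S\<^sup>2 - 3 * S + 1) - S + 2)"
    unfolding split_quadratic_def by (simp add: algebra_simps power2_eq_square)
  ultimately have "0 < split_quadratic \<alpha> (3 * S - 1) S (3 * S - 4)"
    by simp
  moreover have "\<alpha> * (3 * S - 1) - 1 + S * (1 - \<alpha>) + \<alpha> * S \<le> 2 * (3 * S - 4)"
  proof -
    have "0 \<le> S * (1 - \<alpha>)"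
      using assms(2) \<open>\<alpha> < 1\<close> by simp
    moreover have "\<alpha> * (3 * S - 1) - 1 + S * (1 - \<alpha>) + \<alpha> * S
        = 2 * (3 * S - 4) - (3 * (S * (1 - \<alpha>)) + \<alpha> + (2 * S - 7))"
      by (simp add: algebra_simps)
    ultimately show ?thesis
      using assms(1,2) by linarith
  qed
  ultimately show ?thesis
    using assms(4) unfolding split_quadratic_def by (rule quadratic_root_less[rotated])
qed

lemma finite_eta_poly_roots: "finite {x. eta_poly \<alpha> n x = 0}"
proof -
  define p where "p = [: - (\<alpha>\<^sup>2 * n\<^sup>2) + (5 * \<alpha>\<^sup>2 - 3 * \<alpha> + 2) * n - 10 * \<alpha>\<^sup>2 + 15 * \<alpha> - 8,
      \<alpha> * n\<^sup>2 + (\<alpha>\<^sup>2 - 2 * \<alpha> - 1) * n - 2 * \<alpha> + 1, - ((\<alpha> + 1) * n + \<alpha> - 4), 1 :]"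
  have "eta_poly \<alpha> n x = poly p x" for x
    unfolding p_def eta_poly_def by (simp add: algebra_simps power2_eq_square power3_eq_cube)
  moreover have "finite {x. poly p x = 0}"
    by (rule poly_roots_finite) (simp add: p_def)
  ultimately show ?thesis
    by simp
qed

lemma eta_poly_at_n_minus_3: "eta_poly \<alpha> n (n - 3) = - 2 * (1 - \<alpha>) * (1 + \<alpha> * (n - 5))"
  by (simp add: eta_poly_def algebra_simps power2_eq_square power3_eq_cube)

lemma eta_poly_at_n:
  "eta_poly \<alpha> n n = 3 * (1 - \<alpha>) * n\<^sup>2 + n * (3 - 5 * \<alpha> + 5 * \<alpha>\<^sup>2) - 8 + 15 * \<alpha> - 10 * \<alpha>\<^sup>2"
  by (simp add: eta_poly_def algebra_simps power2_eq_square power3_eq_cube)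

lemma less_eta:
  assumes "0 \<le> \<alpha>" "\<alpha> < 1" "5 \<le> n"
  shows "n - 3 < eta \<alpha> n"
proof -
  have "0 < 1 + \<alpha> * (n - 5)"
    using assms by (simp add: add_pos_nonneg)
  then have neg: "eta_poly \<alpha> n (n - 3) < 0"
    unfolding eta_poly_at_n_minus_3 using assms(2) by (intro mult_neg_pos) simp_all
  have "7/4 \<le> 3 - 5 * \<alpha> + 5 * \<alpha>\<^sup>2"
    using zero_le_power2[of "\<alpha> - 1/2"] by (simp add: power2_eq_square algebra_simps)
  then have "5 * (7/4) \<le> n * (3 - 5 * \<alpha> + 5 * \<alpha>\<^sup>2)"
    using assms(3) by (intro mult_mono) auto
  moreover have "\<alpha>\<^sup>2 \<le> \<alpha>"
    using assms(1,2) by (simp add: power2_eq_square mult_left_le_one_le)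
  moreover have "0 \<le> 3 * (1 - \<alpha>) * n\<^sup>2"
    using assms(2) by simp
  ultimately have nonneg: "0 \<le> eta_poly \<alpha> n n"
    unfolding eta_poly_at_n using assms(1) by linarith
  have "continuous_on {n - 3..n} (eta_poly \<alpha> n)"
    unfolding eta_poly_def by (intro continuous_intros)
  then obtain x where x: "n - 3 \<le> x" "eta_poly \<alpha> n x = 0"
    using IVT'[of "eta_poly \<alpha> n" "n - 3" 0 n] neg nonneg by auto
  with neg have "n - 3 < x"
    by (cases "x = n - 3") auto
  also have "x \<le> eta \<alpha> n"
    unfolding eta_def using finite_eta_poly_roots x(2) by (intro Max_ge) auto
  finally show ?thesis .
qed

theorem mainTheorem6:
  fixes \<alpha> :: real and s n :: nat
  assumes "0 \<le> \<alpha>" and "\<alpha> < 1"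
    and "s \<ge> 2" and "n = 3 * s - 1"
    and "real n \<ge> f_bound \<alpha>"
  shows "rho_alpha \<alpha> n (graph_join s complete_graph empty_graph) < real n - 3
       \<and> real n - 3 < eta \<alpha> (real n)"
proof
  have n: "real n = 3 * real s - 1"
    using assms(3,4) by (simp add: of_nat_diff)
  have "14 \<le> real n"
    using f_bound_ge_14[OF assms(1,2)] assms(5) by linarith
  then have "5 \<le> real s" "s + 2 \<le> n"
    using n assms(4) by linarith+
  have "5 \<le> (1 - \<alpha>) * real n"
    using five_le_mult_of_f_bound_le[OF assms(1,2,5)] .
  show "rho_alpha \<alpha> n (complete_split_graph s) < real n - 3"
  proof (rule rho_alpha_complete_split_graph_less[OF \<open>s + 2 \<le> n\<close>])
    show "\<alpha> * real n - 1 < real n - 3"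
      using \<open>5 \<le> (1 - \<alpha>) * real n\<close> by (simp add: algebra_simps)
    have "\<alpha> * real s \<le> real s"
      using assms(1,2) by (intro mult_left_le_one_le) simp_all
    then show "\<alpha> * real s < real n - 3"
      using n \<open>5 \<le> real s\<close> by linarith
    show "\<mu> < real n - 3" if "split_quadratic \<alpha> (real n) (real s) \<mu> = 0" for \<mu>
      using split_quadratic_root_less[OF assms(1) \<open>5 \<le> real s\<close>, of \<mu>] that
        \<open>5 \<le> (1 - \<alpha>) * real n\<close> n by simp
  qed
  show "real n - 3 < eta \<alpha> (real n)"
    using less_eta[OF assms(1,2)] \<open>14 \<le> real n\<close> by simp
qed

end
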